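(* Let $G$ be a finite simple graph on $n$ vertices. Then there exists a finite simple graph $\widehat{G}$ such that \[ h(G,x)=x^{n}\,I(\widehat{G},1/x). \]
   Context: For a graph $G$ on $n$ vertices, let $a_k(G)$ denote the number of ways to cover all vertices of $G$ by exactly $k$ pairwise disjoint cliques of $G$ (i.e. the number of partitions of $V(G)$ into exactly $k$ parts, each inducing a complete subgraph). The adjoint polynomial of $G$ is $h(G,x)=\sum_{k=1}^n(-1)^{n-k}a_k(G)x^k$. For a graph $H$, the independence polynomial is $I(H,x)=\sum_{k\ge 0}(-1)^k i_k(H)x^k$, where $i_k(H)$ is the number of independent sets of size $k$ in $H$ (so $i_0(H)=1$). *)

theory Defs
  imports Complex_Main
begin

definition simple_graph :: "'a set \<Rightarrow> 'a set set \<Rightarrow> bool" where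
  "simple_graph V E \<longleftrightarrow> finite V \<and> (\<forall>e\<in>E. e \<subseteq> V \<and> card e = 2)"

definition is_clique :: "'a set \<Rightarrow> 'a set set \<Rightarrow> 'a set \<Rightarrow> bool" where
  "is_clique V E C \<longleftrightarrow> C \<subseteq> V \<and> (\<forall>u\<in>C. \<forall>v\<in>C. u \<noteq> v \<longrightarrow> {u, v} \<in> E)"

definition clique_covers :: "'a set \<Rightarrow> 'a set set \<Rightarrow> nat \<Rightarrow> 'a set set set" where
  "clique_covers V E k = {P. \<Union>P = V \<and> (\<forall>C\<in>P. C \<noteq> {} \<and> is_clique V E C)
      \<and> (\<forall>C\<in>P. \<forall>D\<in>P. C \<noteq> D \<longrightarrow> C \<inter> D = {}) \<and> finite P \<and> card P = k}"

definition a_coeff :: "'a set \<Rightarrow> 'a set set \<Rightarrow> nat \<Rightarrow> nat" where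
  "a_coeff V E k = card (clique_covers V E k)"

definition adjoint_poly :: "'a set \<Rightarrow> 'a set set \<Rightarrow> real \<Rightarrow> real" where
  "adjoint_poly V E x = (\<Sum>k=1..card V. (-1) ^ (card V - k) * real (a_coeff V E k) * x ^ k)"

definition independent_set :: "'a set \<Rightarrow> 'a set set \<Rightarrow> 'a set \<Rightarrow> bool" where
  "independent_set V E S \<longleftrightarrow> S \<subseteq> V \<and> (\<forall>u\<in>S. \<forall>v\<in>S. {u, v} \<notin> E)"

definition i_coeff :: "'a set \<Rightarrow> 'a set set \<Rightarrow> nat \<Rightarrow> nat" where
  "i_coeff V E k = card {S. independent_set V E S \<and> card S = k}"

definition indep_poly :: "'a set \<Rightarrow> 'a set set \<Rightarrow> real \<Rightarrow> real" where
  "indep_poly V E x = (\<Sum>k=0..card V. (-1) ^ k * real (i_coeff V E k) * x ^ k)"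

end

theory Submission
  imports Defs "HOL-Library.Nat_Bijection"
begin

text \<open>Order the vertices of G (after relabelling them by natural numbers) and let the vertices
  of \<open>\<widehat>G\<close> be the edges of G, oriented from the smaller to the larger end. Two arcs are adjacent
  in \<open>\<widehat>G\<close> when they have the same head but different tails, when the head of one is the tail
  of the other, or when they have the same tail and non-adjacent heads. The independent sets S of
  \<open>\<widehat>G\<close> are then exactly the sets of arcs joining the minimum of each block to the other
  elements of the block, for a partition of V into cliques, and that partition has \<open>n - |S|\<close>
  blocks. Hence \<open>i\<^sub>j(\<widehat>G) = a\<^sub>n\<^sub>-\<^sub>j(G)\<close>, which is the claimed identity after reversing
  the order of summation.\<close>

section \<open>Invariance under relabelling of vertices\<close>

lemma simple_graph_image:
  assumes sg: "simple_graph V E" and inj: "inj_on g V"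
  shows "simple_graph (g ` V) ((`) g ` E)"
  unfolding simple_graph_def
proof (intro conjI ballI)
  show "finite (g ` V)" using sg by (simp add: simple_graph_def)
  fix e assume "e \<in> (`) g ` E"
  then obtain d where d: "d \<in> E" "e = g ` d" by auto
  have "d \<subseteq> V" "card d = 2" using sg d(1) by (auto simp: simple_graph_def)
  moreover have "card (g ` d) = card d"
    using \<open>d \<subseteq> V\<close> by (intro card_image inj_on_subset[OF inj])
  ultimately show "e \<subseteq> g ` V" "card e = 2" using d(2) by auto
qed

lemma edge_image_iff:
  assumes sg: "simple_graph V E" and inj: "inj_on g V" and uv: "u \<in> V" "v \<in> V"
  shows "{g u, g v} \<in> (`) g ` E \<longleftrightarrow> {u, v} \<in> E"
proof
  assume "{g u, g v} \<in> (`) g ` E"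
  then obtain d where d: "d \<in> E" "g ` {u, v} = g ` d" by auto
  have "d \<subseteq> V" using sg d(1) by (auto simp: simple_graph_def)
  then have "d = {u, v}" using inj_on_image_eq_iff[OF inj, of d "{u, v}"] d(2) uv by simp
  then show "{u, v} \<in> E" using d(1) by simp
qed (metis image_empty image_eqI image_insert)

lemma i_coeff_image_le:
  assumes sg: "simple_graph V E" and inj: "inj_on g V"
  shows "i_coeff V E k \<le> i_coeff (g ` V) ((`) g ` E) k"
  unfolding i_coeff_def
proof (rule card_inj_on_le[where f="(`) g"])
  show "finite {S. independent_set (g ` V) ((`) g ` E) S \<and> card S = k}"
    by (rule finite_subset[of _ "Pow (g ` V)"])
      (use sg in \<open>auto simp: independent_set_def simple_graph_def\<close>)
  show "inj_on ((`) g) {S. independent_set V E S \<and> card S = k}"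
    by (rule inj_on_image, rule inj_on_subset[OF inj]) (auto simp: independent_set_def)
  show "(`) g ` {S. independent_set V E S \<and> card S = k}
        \<subseteq> {S. independent_set (g ` V) ((`) g ` E) S \<and> card S = k}"
  proof (rule image_subsetI)
    fix S assume "S \<in> {S. independent_set V E S \<and> card S = k}"
    then have S: "independent_set V E S" "card S = k" by simp_all
    then have SV: "S \<subseteq> V" by (simp add: independent_set_def)
    have "card (g ` S) = k" using S(2) card_image[OF inj_on_subset[OF inj SV]] by simp
    moreover have "independent_set (g ` V) ((`) g ` E) (g ` S)"
      unfolding independent_set_def
    proof (intro conjI ballI)
      show "g ` S \<subseteq> g ` V" using SV by blast
      fix a b assume "a \<in> g ` S" "b \<in> g ` S"
      then obtain u v where "u \<in> S" "v \<in> S" "a = g u" "b = g v" by blast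
      then show "{a, b} \<notin> (`) g ` E"
        using S(1) SV edge_image_iff[OF sg inj, of u v] by (auto simp: independent_set_def)
    qed
    ultimately show "g ` S \<in> {S. independent_set (g ` V) ((`) g ` E) S \<and> card S = k}" by simp
  qed
qed

lemma image_clique_cover:
  assumes inj: "inj_on g V" and P: "P \<in> clique_covers V E k"
  shows "(`) g ` P \<in> clique_covers (g ` V) ((`) g ` E) k"
proof -
  have PV: "\<And>C. C \<in> P \<Longrightarrow> C \<subseteq> V" using P by (auto simp: clique_covers_def)
  have injP: "inj_on ((`) g) P"
    by (rule inj_on_image, rule inj_on_subset[OF inj]) (use PV in auto)
  have disj: "\<And>C D. C \<in> P \<Longrightarrow> D \<in> P \<Longrightarrow> C \<noteq> D \<Longrightarrow> C \<inter> D = {}"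
    using P by (auto simp: clique_covers_def)
  show ?thesis
    unfolding clique_covers_def
  proof (intro CollectI conjI ballI impI)
    show "\<Union> ((`) g ` P) = g ` V" using P by (auto simp: clique_covers_def)
    show "finite ((`) g ` P)" using P by (auto simp: clique_covers_def)
    show "card ((`) g ` P) = k" using P injP by (auto simp: clique_covers_def card_image)
  next
    fix C' assume "C' \<in> (`) g ` P"
    then obtain C where C: "C \<in> P" "C' = g ` C" by auto
    show "C' \<noteq> {}" using P C by (auto simp: clique_covers_def)
    have cl: "is_clique V E C" using P C by (auto simp: clique_covers_def)
    show "is_clique (g ` V) ((`) g ` E) C'"
      unfolding is_clique_def
    proof (intro conjI ballI impI)
      show "C' \<subseteq> g ` V" using C PV by auto
      fix a b assume "a \<in> C'" "b \<in> C'" "a \<noteq> b"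
      then obtain u v where uv: "u \<in> C" "v \<in> C" "a = g u" "b = g v" "u \<noteq> v" using C by auto
      then have "{u, v} \<in> E" using cl by (auto simp: is_clique_def)
      then have "g ` {u, v} \<in> (`) g ` E" by (rule imageI)
      then show "{a, b} \<in> (`) g ` E" using uv by simp
    qed
  next
    fix C' D' assume "C' \<in> (`) g ` P" "D' \<in> (`) g ` P" "C' \<noteq> D'"
    then obtain C D where CD: "C \<in> P" "D \<in> P" "C' = g ` C" "D' = g ` D" "C \<noteq> D" by auto
    then have "C' \<inter> D' = g ` (C \<inter> D)" using inj_on_image_Int[OF inj PV PV] by simp
    then show "C' \<inter> D' = {}" using disj CD by simp
  qed
qed

lemma a_coeff_image_le:
  assumes sg: "simple_graph V E" and inj: "inj_on g V"
  shows "a_coeff V E k \<le> a_coeff (g ` V) ((`) g ` E) k"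
  unfolding a_coeff_def
proof (rule card_inj_on_le[where f="(`) ((`) g)"])
  show "finite (clique_covers (g ` V) ((`) g ` E) k)"
    by (rule finite_subset[of _ "Pow (Pow (g ` V))"])
      (use sg in \<open>auto simp: clique_covers_def simple_graph_def\<close>)
  show "inj_on ((`) ((`) g)) (clique_covers V E k)"
    by (rule inj_on_image, rule inj_on_image, rule inj_on_subset[OF inj]) (auto simp: clique_covers_def)
  show "(`) ((`) g) ` clique_covers V E k \<subseteq> clique_covers (g ` V) ((`) g ` E) k"
    using image_clique_cover[OF inj] by blast
qed

lemma
  assumes sg: "simple_graph V E" and inj: "inj_on g V"
  shows adjoint_poly_image: "adjoint_poly (g ` V) ((`) g ` E) = adjoint_poly V E"
    and indep_poly_image: "indep_poly (g ` V) ((`) g ` E) = indep_poly V E"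
proof -
  define h where "h = inv_into V g"
  have inj_h: "inj_on h (g ` V)" unfolding h_def by (rule inj_on_inv_into) simp
  have hV: "h ` g ` V = V" unfolding h_def using inj by simp
  have hE: "(`) h ` (`) g ` E = E"
  proof -
    have "h ` g ` e = e" if "e \<in> E" for e
      unfolding h_def using inj sg that by (auto simp: simple_graph_def inv_into_image_cancel)
    then show ?thesis by (force simp: image_comp)
  qed
  have sg': "simple_graph (g ` V) ((`) g ` E)" by (rule simple_graph_image[OF sg inj])
  have "a_coeff (g ` V) ((`) g ` E) = a_coeff V E"
    using a_coeff_image_le[OF sg inj] a_coeff_image_le[OF sg' inj_h] hV hE
    by (simp add: fun_eq_iff le_antisym)
  moreover have "i_coeff (g ` V) ((`) g ` E) = i_coeff V E"
    using i_coeff_image_le[OF sg inj] i_coeff_image_le[OF sg' inj_h] hV hE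
    by (simp add: fun_eq_iff le_antisym)
  moreover have "card (g ` V) = card V" using inj by (simp add: card_image)
  ultimately show "adjoint_poly (g ` V) ((`) g ` E) = adjoint_poly V E"
    and "indep_poly (g ` V) ((`) g ` E) = indep_poly V E"
    by (auto intro!: ext simp: adjoint_poly_def indep_poly_def)
qed

section \<open>The arc-clash graph\<close>

definition arcs :: "'a::linorder set \<Rightarrow> 'a set set \<Rightarrow> ('a \<times> 'a) set" where
  "arcs V E = {(u, v). u \<in> V \<and> v \<in> V \<and> u < v \<and> {u, v} \<in> E}"

fun arc_clash :: "'a set set \<Rightarrow> 'a \<times> 'a \<Rightarrow> 'a \<times> 'a \<Rightarrow> bool" where
  "arc_clash E (u, v) (u', v') \<longleftrightarrow>
     (v = v' \<and> u \<noteq> u') \<or> v = u' \<or> (u = u' \<and> v \<noteq> v' \<and> {v, v'} \<notin> E)"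

definition arc_clash_edges :: "'a::linorder set \<Rightarrow> 'a set set \<Rightarrow> ('a \<times> 'a) set set" where
  "arc_clash_edges V E =
     {{p, q} | p q. p \<in> arcs V E \<and> q \<in> arcs V E \<and> p \<noteq> q \<and> (arc_clash E p q \<or> arc_clash E q p)}"

lemma arc_clash_edges_iff:
  "{p, q} \<in> arc_clash_edges V E \<longleftrightarrow>
     p \<in> arcs V E \<and> q \<in> arcs V E \<and> p \<noteq> q \<and> (arc_clash E p q \<or> arc_clash E q p)"
proof
  assume "{p, q} \<in> arc_clash_edges V E"
  then obtain p' q' where pq': "{p, q} = {p', q'}"
    and "p' \<in> arcs V E \<and> q' \<in> arcs V E \<and> p' \<noteq> q' \<and> (arc_clash E p' q' \<or> arc_clash E q' p')"
    unfolding arc_clash_edges_def by blast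
  moreover from pq' have "(p = p' \<and> q = q') \<or> (p = q' \<and> q = p')"
    by (simp add: doubleton_eq_iff)
  ultimately show "p \<in> arcs V E \<and> q \<in> arcs V E \<and> p \<noteq> q \<and> (arc_clash E p q \<or> arc_clash E q p)"
    by blast
qed (unfold arc_clash_edges_def, blast)

lemma simple_graph_arc_clash:
  assumes "finite V"
  shows "simple_graph (arcs V E) (arc_clash_edges V E)"
  unfolding simple_graph_def
proof (intro conjI ballI)
  have "arcs V E \<subseteq> V \<times> V" unfolding arcs_def by auto
  then show "finite (arcs V E)" by (rule finite_subset) (simp add: assms)
  fix e assume "e \<in> arc_clash_edges V E"
  then obtain p q where "e = {p, q}" "p \<in> arcs V E" "q \<in> arcs V E" "p \<noteq> q"
    unfolding arc_clash_edges_def by blast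
  then show "e \<subseteq> arcs V E" "card e = 2" by auto
qed

lemma independent_set_arc_clash_iff:
  "independent_set (arcs V E) (arc_clash_edges V E) S \<longleftrightarrow>
     S \<subseteq> arcs V E \<and> (\<forall>p\<in>S. \<forall>q\<in>S. p \<noteq> q \<longrightarrow> \<not> arc_clash E p q)"
  unfolding independent_set_def
proof (intro iffI conjI ballI impI)
  assume indep: "S \<subseteq> arcs V E \<and> (\<forall>p\<in>S. \<forall>q\<in>S. {p, q} \<notin> arc_clash_edges V E)"
  then show "S \<subseteq> arcs V E" by simp
  fix p q assume "p \<in> S" "q \<in> S" "p \<noteq> q"
  then show "\<not> arc_clash E p q" using indep arc_clash_edges_iff[of p q V E] by auto
next
  assume no_clash: "S \<subseteq> arcs V E \<and> (\<forall>p\<in>S. \<forall>q\<in>S. p \<noteq> q \<longrightarrow> \<not> arc_clash E p q)"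
  then show "S \<subseteq> arcs V E" by simp
  fix p q assume "p \<in> S" "q \<in> S"
  then show "{p, q} \<notin> arc_clash_edges V E" using no_clash arc_clash_edges_iff[of p q V E] by auto
qed

section \<open>Clique partitions and conflict-free arc sets\<close>

definition clique_partitions :: "'a set \<Rightarrow> 'a set set \<Rightarrow> 'a set set set" where
  "clique_partitions V E = {P. \<Union>P = V \<and> (\<forall>C\<in>P. C \<noteq> {} \<and> is_clique V E C)
      \<and> (\<forall>C\<in>P. \<forall>D\<in>P. C \<noteq> D \<longrightarrow> C \<inter> D = {}) \<and> finite P}"

lemma a_coeff_eq_card_clique_partitions:
  "a_coeff V E k = card {P \<in> clique_partitions V E. card P = k}"
  unfolding a_coeff_def clique_covers_def clique_partitions_def
  by (rule arg_cong[where f=card]) blast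

lemma a_coeff_0:
  assumes "V \<noteq> {}"
  shows "a_coeff V E 0 = 0"
proof -
  have "{P \<in> clique_partitions V E. card P = 0} = {}"
    using assms by (auto simp: clique_partitions_def card_eq_0_iff)
  then show ?thesis unfolding a_coeff_eq_card_clique_partitions by (simp only: card.empty)
qed

definition star_arcs :: "'a::linorder set set \<Rightarrow> ('a \<times> 'a) set" where
  "star_arcs P = {(Min C, v) | C v. C \<in> P \<and> v \<in> C \<and> v \<noteq> Min C}"

definition star :: "('a \<times> 'a) set \<Rightarrow> 'a \<Rightarrow> 'a set" where
  "star S r = insert r {v. (r, v) \<in> S}"

definition star_partition :: "'a set \<Rightarrow> ('a \<times> 'a) set \<Rightarrow> 'a set set" where
  "star_partition V S = star S ` (V - snd ` S)"

locale clique_partition =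
  fixes V :: "'a::linorder set" and E :: "'a set set" and P :: "'a set set"
  assumes finite_V: "finite V"
    and Union_blocks: "\<Union>P = V"
    and block_nonempty: "C \<in> P \<Longrightarrow> C \<noteq> {}"
    and block_clique: "C \<in> P \<Longrightarrow> is_clique V E C"
    and blocks_disjoint: "C \<in> P \<Longrightarrow> D \<in> P \<Longrightarrow> C \<noteq> D \<Longrightarrow> C \<inter> D = {}"
begin

lemma block_subset: "C \<in> P \<Longrightarrow> C \<subseteq> V"
  using block_clique by (simp add: is_clique_def)

lemma block_finite: "C \<in> P \<Longrightarrow> finite C"
  using block_subset finite_V finite_subset by blast

lemma Min_in_block: "C \<in> P \<Longrightarrow> Min C \<in> C"
  using block_finite block_nonempty by simp

lemma Min_le_block: "C \<in> P \<Longrightarrow> x \<in> C \<Longrightarrow> Min C \<le> x"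
  using block_finite by simp

lemma block_unique: "C \<in> P \<Longrightarrow> D \<in> P \<Longrightarrow> x \<in> C \<Longrightarrow> x \<in> D \<Longrightarrow> C = D"
  using blocks_disjoint by blast

lemma block_edge: "C \<in> P \<Longrightarrow> u \<in> C \<Longrightarrow> v \<in> C \<Longrightarrow> u \<noteq> v \<Longrightarrow> {u, v} \<in> E"
  using block_clique unfolding is_clique_def by blast

lemma block_cover: "x \<in> V \<Longrightarrow> \<exists>C\<in>P. x \<in> C"
  using Union_blocks by blast

lemma inj_on_Min: "inj_on Min P"
proof (rule inj_onI)
  fix C D assume "C \<in> P" "D \<in> P" "Min C = Min D"
  then show "C = D" using block_unique[OF \<open>C \<in> P\<close> \<open>D \<in> P\<close> Min_in_block] Min_in_block by simp
qed

lemma star_arcs_subset: "star_arcs P \<subseteq> arcs V E"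
proof
  fix p assume "p \<in> star_arcs P"
  then obtain C v where p: "p = (Min C, v)" "C \<in> P" "v \<in> C" "v \<noteq> Min C"
    unfolding star_arcs_def by blast
  have "Min C < v" using Min_le_block[OF p(2,3)] p(4) by simp
  moreover have "{Min C, v} \<in> E" using block_edge[OF p(2) Min_in_block[OF p(2)] p(3)] p(4) by simp
  moreover have "Min C \<in> V" "v \<in> V" using block_subset[OF p(2)] Min_in_block[OF p(2)] p(3) by auto
  ultimately show "p \<in> arcs V E" unfolding arcs_def p(1) by simp
qed

lemma no_clash_star_arcs:
  assumes "p \<in> star_arcs P" "q \<in> star_arcs P" "p \<noteq> q"
  shows "\<not> arc_clash E p q"
proof
  assume clash: "arc_clash E p q"
  obtain C v where p: "p = (Min C, v)" "C \<in> P" "v \<in> C" "v \<noteq> Min C"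
    using assms(1) unfolding star_arcs_def by blast
  obtain D w where q: "q = (Min D, w)" "D \<in> P" "w \<in> D" "w \<noteq> Min D"
    using assms(2) unfolding star_arcs_def by blast
  from clash consider "v = w" "Min C \<noteq> Min D" | "v = Min D"
    | "Min C = Min D" "v \<noteq> w" "{v, w} \<notin> E"
    unfolding p(1) q(1) by auto
  then show False
  proof cases
    case 1
    then show False using block_unique[OF p(2) q(2) p(3)] q(3) by auto
  next
    case 2
    then have "C = D" using block_unique[OF p(2) q(2) p(3)] Min_in_block[OF q(2)] by auto
    then show False using 2 p(4) by simp
  next
    case 3
    then have "C = D" using inj_on_Min p(2) q(2) by (simp add: inj_on_def)
    then show False using block_edge[OF p(2) p(3) _ 3(2)] q(3) 3(3) by auto
  qed
qed

lemma independent_star_arcs: "independent_set (arcs V E) (arc_clash_edges V E) (star_arcs P)"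
  unfolding independent_set_arc_clash_iff by (simp add: star_arcs_subset no_clash_star_arcs)

lemma snd_star_arcs: "snd ` star_arcs P = V - Min ` P"
proof (intro equalityI subsetI)
  fix x assume "x \<in> snd ` star_arcs P"
  then obtain C where C: "C \<in> P" "x \<in> C" "x \<noteq> Min C" unfolding star_arcs_def by auto
  have "x \<notin> Min ` P"
  proof
    assume "x \<in> Min ` P"
    then obtain D where D: "D \<in> P" "x = Min D" by blast
    then have "C = D" using block_unique[OF C(1) D(1) C(2)] Min_in_block[OF D(1)] by simp
    then show False using C(3) D(2) by simp
  qed
  then show "x \<in> V - Min ` P" using block_subset[OF C(1)] C(2) by auto
next
  fix x assume x: "x \<in> V - Min ` P"
  then obtain C where C: "C \<in> P" "x \<in> C" using block_cover by auto
  have "x \<noteq> Min C" using x C(1) by auto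
  then have "(Min C, x) \<in> star_arcs P" unfolding star_arcs_def using C by blast
  then show "x \<in> snd ` star_arcs P" by force
qed

lemma inj_on_snd_star_arcs: "inj_on snd (star_arcs P)"
proof (rule inj_onI)
  fix p q assume pq: "p \<in> star_arcs P" "q \<in> star_arcs P" "snd p = snd q"
  obtain C v where p: "p = (Min C, v)" "C \<in> P" "v \<in> C"
    using pq(1) unfolding star_arcs_def by blast
  obtain D w where q: "q = (Min D, w)" "D \<in> P" "w \<in> D"
    using pq(2) unfolding star_arcs_def by blast
  have "v = w" using pq(3) p(1) q(1) by simp
  then have "C = D" using block_unique[OF p(2) q(2) p(3)] q(3) by simp
  then show "p = q" using p(1) q(1) \<open>v = w\<close> by simp
qed

text \<open>Every vertex other than a block minimum is the head of exactly one arc.\<close>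

lemma card_star_arcs: "card (star_arcs P) + card P = card V"
proof -
  have MV: "Min ` P \<subseteq> V" using Min_in_block block_subset by blast
  have "card (star_arcs P) = card (V - Min ` P)"
    using inj_on_snd_star_arcs by (simp flip: snd_star_arcs add: card_image)
  also have "\<dots> = card V - card P"
    using MV finite_V inj_on_Min by (simp add: card_Diff_subset finite_subset card_image)
  finally show ?thesis using card_mono[OF finite_V MV] inj_on_Min by (simp add: card_image)
qed

lemma star_star_arcs:
  assumes C: "C \<in> P"
  shows "star (star_arcs P) (Min C) = C"
proof (intro equalityI subsetI)
  fix x assume "x \<in> star (star_arcs P) (Min C)"
  then consider "x = Min C" | D where "Min C = Min D" "D \<in> P" "x \<in> D"
    unfolding star_def star_arcs_def by blast
  then show "x \<in> C"
  proof cases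
    case 2
    then have "C = D" using inj_on_Min C by (simp add: inj_on_def)
    then show ?thesis using 2 by simp
  qed (use Min_in_block[OF C] in simp)
next
  fix x assume "x \<in> C"
  then show "x \<in> star (star_arcs P) (Min C)" unfolding star_def star_arcs_def using C by blast
qed

lemma star_partition_star_arcs: "star_partition V (star_arcs P) = P"
proof -
  have "V - snd ` star_arcs P = Min ` P"
    unfolding snd_star_arcs using Min_in_block block_subset by blast
  then have "star_partition V (star_arcs P) = (\<lambda>C. star (star_arcs P) (Min C)) ` P"
    unfolding star_partition_def by (simp add: image_comp)
  then show ?thesis using star_star_arcs by simp
qed

end

locale conflict_free_arcs =
  fixes V :: "'a::linorder set" and E :: "'a set set" and S :: "('a \<times> 'a) set"
  assumes finite_V: "finite V"
    and independent: "independent_set (arcs V E) (arc_clash_edges V E) S"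
begin

lemma arcs_subset: "S \<subseteq> arcs V E"
  using independent independent_set_arc_clash_iff by blast

lemma arc_in_S: "(u, v) \<in> S \<Longrightarrow> u \<in> V \<and> v \<in> V \<and> u < v \<and> {u, v} \<in> E"
  using arcs_subset unfolding arcs_def by blast

lemma no_clash: "p \<in> S \<Longrightarrow> q \<in> S \<Longrightarrow> p \<noteq> q \<Longrightarrow> \<not> arc_clash E p q"
  using independent unfolding independent_set_arc_clash_iff by blast

lemma tail_not_head: "(u, v) \<in> S \<Longrightarrow> u \<notin> snd ` S"
proof
  assume uv: "(u, v) \<in> S" and "u \<in> snd ` S"
  then obtain w where w: "(w, u) \<in> S" by force
  have "(w, u) \<noteq> (u, v)" using arc_in_S[OF w] by auto
  then show False using no_clash[OF w uv] by simp
qed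

lemma head_unique: "(u, v) \<in> S \<Longrightarrow> (u', v) \<in> S \<Longrightarrow> u = u'"
  using no_clash[of "(u, v)" "(u', v)"] by force

lemma heads_adjacent: "(r, v) \<in> S \<Longrightarrow> (r, w) \<in> S \<Longrightarrow> v \<noteq> w \<Longrightarrow> {v, w} \<in> E"
  using no_clash[of "(r, v)" "(r, w)"] by force

lemma star_subset: "r \<in> V \<Longrightarrow> star S r \<subseteq> V"
  unfolding star_def using arc_in_S by blast

lemma Min_star: "r \<in> V \<Longrightarrow> Min (star S r) = r"
proof (rule Min_eqI)
  assume "r \<in> V"
  then show "finite (star S r)" using star_subset finite_V finite_subset by blast
  show "r \<in> star S r" unfolding star_def by simp
  fix y assume "y \<in> star S r"
  then show "r \<le> y" unfolding star_def using arc_in_S by fastforce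
qed

lemma root_of_head: "(u, v) \<in> S \<Longrightarrow> u \<in> V - snd ` S"
  using tail_not_head arc_in_S by blast

lemma star_is_clique: "r \<in> V \<Longrightarrow> is_clique V E (star S r)"
  unfolding is_clique_def
proof (intro conjI ballI impI)
  assume r: "r \<in> V"
  then show "star S r \<subseteq> V" by (rule star_subset)
  fix a b assume "a \<in> star S r" "b \<in> star S r" "a \<noteq> b"
  then consider "a = r" "(r, b) \<in> S" | "b = r" "(r, a) \<in> S" | "(r, a) \<in> S" "(r, b) \<in> S"
    unfolding star_def by auto
  then show "{a, b} \<in> E"
  proof cases
    case 1
    then show ?thesis using arc_in_S by blast
  next
    case 2
    then have "{b, a} \<in> E" using arc_in_S by blast
    then show ?thesis by (simp add: insert_commute)
  next
    case 3
    then show ?thesis using heads_adjacent \<open>a \<noteq> b\<close> by blast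
  qed
qed

lemma stars_disjoint:
  assumes r: "r \<in> V - snd ` S" and r': "r' \<in> V - snd ` S" and "r \<noteq> r'"
  shows "star S r \<inter> star S r' = {}"
proof (rule ccontr)
  assume "star S r \<inter> star S r' \<noteq> {}"
  then obtain x where "x = r \<or> (r, x) \<in> S" "x = r' \<or> (r', x) \<in> S" unfolding star_def by auto
  then have "(r, x) \<in> S" "(r', x) \<in> S" using r r' \<open>r \<noteq> r'\<close> by force+
  then show False using head_unique \<open>r \<noteq> r'\<close> by blast
qed

lemma star_partition_in_clique_partitions: "star_partition V S \<in> clique_partitions V E"
  unfolding clique_partitions_def star_partition_def
proof (intro CollectI conjI ballI impI)
  show "\<Union> (star S ` (V - snd ` S)) = V"
  proof (intro equalityI subsetI)
    fix x assume "x \<in> \<Union> (star S ` (V - snd ` S))"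
    then show "x \<in> V" using star_subset by blast
  next
    fix x assume x: "x \<in> V"
    show "x \<in> \<Union> (star S ` (V - snd ` S))"
    proof (cases "x \<in> snd ` S")
      case False
      then show ?thesis using x unfolding star_def by blast
    next
      case True
      then obtain u where "(u, x) \<in> S" by force
      then show ?thesis using root_of_head unfolding star_def by blast
    qed
  qed
  show "finite (star S ` (V - snd ` S))" using finite_V by simp
next
  fix C assume "C \<in> star S ` (V - snd ` S)"
  then show "C \<noteq> {}" "is_clique V E C" using star_is_clique unfolding star_def by auto
next
  fix C D assume "C \<in> star S ` (V - snd ` S)" "D \<in> star S ` (V - snd ` S)" "C \<noteq> D"
  then show "C \<inter> D = {}" using stars_disjoint by blast
qed

lemma star_arcs_star_partition: "star_arcs (star_partition V S) = S"
proof (intro equalityI subsetI)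
  fix p assume "p \<in> star_arcs (star_partition V S)"
  then obtain r v where "p = (Min (star S r), v)" "r \<in> V" "v \<in> star S r" "v \<noteq> Min (star S r)"
    unfolding star_arcs_def star_partition_def by blast
  then show "p \<in> S" using Min_star unfolding star_def by auto
next
  fix p assume "p \<in> S"
  moreover obtain u v where p: "p = (u, v)" by (cases p)
  ultimately have uv: "(u, v) \<in> S" by simp
  have "star S u \<in> star_partition V S"
    using root_of_head[OF uv] unfolding star_partition_def by blast
  moreover have "v \<in> star S u" using uv unfolding star_def by simp
  moreover have "Min (star S u) = u" using Min_star arc_in_S[OF uv] by blast
  moreover have "v \<noteq> u" using arc_in_S[OF uv] by auto
  ultimately show "p \<in> star_arcs (star_partition V S)" unfolding star_arcs_def p by force
qed

end

lemma clique_partitionI: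
  "finite V \<Longrightarrow> P \<in> clique_partitions V E \<Longrightarrow> clique_partition V E P"
  unfolding clique_partition_def clique_partitions_def by blast

lemma bij_betw_star_arcs:
  assumes fin: "finite V"
  shows "bij_betw star_arcs {P \<in> clique_partitions V E. card P + j = card V}
           {S. independent_set (arcs V E) (arc_clash_edges V E) S \<and> card S = j}"
    (is "bij_betw _ ?A ?B")
proof (rule bij_betw_byWitness[where f'="star_partition V"])
  note cp = clique_partitionI[where E = E, OF fin]
  have cf: "conflict_free_arcs V E S"
    if "independent_set (arcs V E) (arc_clash_edges V E) S" for S
    using fin that by unfold_locales
  show "\<forall>P\<in>?A. star_partition V (star_arcs P) = P"
    using clique_partition.star_partition_star_arcs[OF cp] by simp
  show "\<forall>S\<in>?B. star_arcs (star_partition V S) = S"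
    using conflict_free_arcs.star_arcs_star_partition[OF cf] by simp
  show "star_arcs ` ?A \<subseteq> ?B"
  proof (rule image_subsetI)
    fix P assume "P \<in> ?A"
    then have P: "P \<in> clique_partitions V E" "card P + j = card V" by simp_all
    show "star_arcs P \<in> ?B"
      using clique_partition.independent_star_arcs[OF cp[OF P(1)]]
        clique_partition.card_star_arcs[OF cp[OF P(1)]] P(2) by simp
  qed
  show "star_partition V ` ?B \<subseteq> ?A"
  proof (rule image_subsetI)
    fix S assume "S \<in> ?B"
    then have S: "independent_set (arcs V E) (arc_clash_edges V E) S" "card S = j" by simp_all
    have P: "star_partition V S \<in> clique_partitions V E"
      by (rule conflict_free_arcs.star_partition_in_clique_partitions[OF cf[OF S(1)]])
    have "card (star_arcs (star_partition V S)) + card (star_partition V S) = card V"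
      by (rule clique_partition.card_star_arcs[OF cp[OF P]])
    then show "star_partition V S \<in> ?A"
      using P S(2) conflict_free_arcs.star_arcs_star_partition[OF cf[OF S(1)]] by simp
  qed
qed

lemma i_coeff_arc_clash:
  "finite V \<Longrightarrow> i_coeff (arcs V E) (arc_clash_edges V E) j
     = card {P \<in> clique_partitions V E. card P + j = card V}"
  unfolding i_coeff_def by (simp add: bij_betw_same_card[OF bij_betw_star_arcs])

lemma i_coeff_arc_clash_eq_a_coeff:
  assumes "finite V"
  shows "i_coeff (arcs V E) (arc_clash_edges V E) j
           = (if j \<le> card V then a_coeff V E (card V - j) else 0)"
proof -
  have "{P \<in> clique_partitions V E. card P + j = card V}
          = (if j \<le> card V then {P \<in> clique_partitions V E. card P = card V - j} else {})"
    by auto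
  then show ?thesis
    by (simp add: i_coeff_arc_clash[OF assms] a_coeff_eq_card_clique_partitions)
qed

lemma indep_poly_eq_sum_upto:
  assumes "finite W" and vanish: "\<And>j. N < j \<Longrightarrow> i_coeff W F j = 0"
  shows "indep_poly W F x = (\<Sum>j=0..N. (-1) ^ j * real (i_coeff W F j) * x ^ j)"
proof -
  have beyond_card: "i_coeff W F j = 0" if "card W < j" for j
  proof -
    have "card S \<le> card W" if "independent_set W F S" for S
      using that card_mono[OF \<open>finite W\<close>] by (simp add: independent_set_def)
    then have "{S. independent_set W F S \<and> card S = j} = {}" using \<open>card W < j\<close> by fastforce
    then show ?thesis unfolding i_coeff_def by (simp only: card.empty)
  qed
  let ?M = "max (card W) N"
  have "indep_poly W F x = (\<Sum>j=0..?M. (-1) ^ j * real (i_coeff W F j) * x ^ j)"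
    unfolding indep_poly_def by (rule sum.mono_neutral_left) (auto simp: beyond_card)
  also have "\<dots> = (\<Sum>j=0..N. (-1) ^ j * real (i_coeff W F j) * x ^ j)"
    by (rule sum.mono_neutral_right) (auto simp: vanish)
  finally show ?thesis .
qed

lemma adjoint_poly_eq_indep_poly_arc_clash:
  fixes V :: "'a::linorder set" and x :: real
  assumes "finite V" and "V \<noteq> {}" and "x \<noteq> 0"
  shows "adjoint_poly V E x = x ^ card V * indep_poly (arcs V E) (arc_clash_edges V E) (1 / x)"
proof -
  define n where "n = card V"
  define a where "a = a_coeff V E"
  have finite_arcs: "finite (arcs V E)"
    using simple_graph_arc_clash[OF assms(1)] by (simp add: simple_graph_def)
  have i_coeff: "i_coeff (arcs V E) (arc_clash_edges V E) j = (if j \<le> n then a (n - j) else 0)"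
    for j unfolding a_def n_def by (rule i_coeff_arc_clash_eq_a_coeff[OF assms(1)])
  have "indep_poly (arcs V E) (arc_clash_edges V E) (1 / x)
          = (\<Sum>j=0..n. (-1) ^ j * real (i_coeff (arcs V E) (arc_clash_edges V E) j) * (1 / x) ^ j)"
    using finite_arcs by (rule indep_poly_eq_sum_upto) (simp add: i_coeff)
  then have "x ^ n * indep_poly (arcs V E) (arc_clash_edges V E) (1 / x)
          = x ^ n * (\<Sum>j=0..n. (-1) ^ j * real (a (n - j)) * (1 / x) ^ j)"
    by (simp add: i_coeff)
  also have "\<dots> = (\<Sum>j=0..n. (-1) ^ j * real (a (n - j)) * x ^ (n - j))"
    unfolding sum_distrib_left
    by (rule sum.cong) (auto simp: power_diff power_one_over \<open>x \<noteq> 0\<close>)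
  also have "\<dots> = (\<Sum>k=0..n. (-1) ^ (n - k) * real (a k) * x ^ k)"
    by (subst sum.atLeastAtMost_rev) (auto intro: sum.cong)
  also have "\<dots> = (\<Sum>k=1..n. (-1) ^ (n - k) * real (a k) * x ^ k)"
    by (subst sum.atLeast_Suc_atMost) (auto simp: a_def a_coeff_0[OF assms(2)])
  finally show ?thesis unfolding adjoint_poly_def a_def n_def by simp
qed

theorem theorem1:
  fixes V :: "'a set" and E :: "'a set set"
  assumes "simple_graph V E" and "V \<noteq> {}"
  shows "\<exists>(W :: nat set) (F :: nat set set). simple_graph W F \<and>
           (\<forall>x::real. x \<noteq> 0 \<longrightarrow>
              adjoint_poly V E x = x ^ card V * indep_poly W F (1 / x))"
proof -
  have "finite V" using assms(1) by (simp add: simple_graph_def)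
  then obtain f :: "'a \<Rightarrow> nat" where f: "inj_on f V"
    using finite_imp_inj_to_nat_seg by blast
  define V' where "V' = f ` V"
  define E' where "E' = (`) f ` E"
  have "finite V'" "V' \<noteq> {}" "card V' = card V"
    using \<open>finite V\<close> assms(2) f by (simp_all add: V'_def card_image)
  have clash: "simple_graph (arcs V' E') (arc_clash_edges V' E')"
    using \<open>finite V'\<close> by (rule simple_graph_arc_clash)
  define W where "W = prod_encode ` arcs V' E'"
  define F where "F = (`) prod_encode ` arc_clash_edges V' E'"
  show ?thesis
  proof (intro exI conjI allI impI)
    show "simple_graph W F"
      unfolding W_def F_def using clash inj_prod_encode by (rule simple_graph_image)
    fix x :: real assume "x \<noteq> 0"
    have "adjoint_poly V E x = adjoint_poly V' E' x"
      unfolding V'_def E'_def adjoint_poly_image[OF assms(1) f] ..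
    also have "\<dots> = x ^ card V' * indep_poly (arcs V' E') (arc_clash_edges V' E') (1 / x)"
      using \<open>finite V'\<close> \<open>V' \<noteq> {}\<close> \<open>x \<noteq> 0\<close> by (rule adjoint_poly_eq_indep_poly_arc_clash)
    also have "\<dots> = x ^ card V * indep_poly W F (1 / x)"
      unfolding W_def F_def indep_poly_image[OF clash inj_prod_encode] \<open>card V' = card V\<close> ..
    finally show "adjoint_poly V E x = x ^ card V * indep_poly W F (1 / x)" .
  qed
qed

end
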